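(* A finite idempotent algebra $\mathbf{A}$ lies in a congruence distributive variety (equivalently, $\mathbf{A}$ has directed Jónsson terms) if and only if $\{a\}$ Jónsson absorbs $\mathbf{A}$ for every $a\in A$.
   Context: Directed Jónsson terms: ternary terms $d_0,\dots,d_n$ with $d_0(x,y,z)=x$, $d_n(x,y,z)=z$, $d_i(x,y,y)=d_{i+1}(x,x,y)$ for $i<n$, and $d_i(x,y,x)=x$ for all $i$. Jónsson absorption: a subuniverse $B$ of $\mathbf{A}$ Jónsson absorbs $\mathbf{A}$ if there are ternary terms $d_0,\dots,d_n$ of $\mathbf{A}$ such that $d_i(b,a,b')\in B$ for all $i$, all $b,b'\in B$, $a\in A$; $d_i(x,y,y)=d_{i+1}(x,x,y)$ for all $i<n$ and all $x,y\in A$; $d_0(x,y,z)=x$ and $d_n(x,y,z)=z$ for all $x,y,z\in A$. An algebra is idempotent if every basic operation $f$ satisfies $f(x,\dots,x)\approx x$. *)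

theory Defs
  imports Main
begin

definition is_algebra :: "'a set \<Rightarrow> ('s \<Rightarrow> nat) \<Rightarrow> ('s \<Rightarrow> 'a list \<Rightarrow> 'a) \<Rightarrow> bool" where
  "is_algebra A ar ops \<longleftrightarrow>
     (\<forall>f xs. length xs = ar f \<and> set xs \<subseteq> A \<longrightarrow> ops f xs \<in> A)"

definition idempotent_alg :: "'a set \<Rightarrow> ('s \<Rightarrow> nat) \<Rightarrow> ('s \<Rightarrow> 'a list \<Rightarrow> 'a) \<Rightarrow> bool" where
  "idempotent_alg A ar ops \<longleftrightarrow> (\<forall>f. \<forall>x\<in>A. ops f (replicate (ar f) x) = x)"

definition subuniverse :: "'a set \<Rightarrow> ('s \<Rightarrow> nat) \<Rightarrow> ('s \<Rightarrow> 'a list \<Rightarrow> 'a) \<Rightarrow> 'a set \<Rightarrow> bool" where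
  "subuniverse A ar ops B \<longleftrightarrow> B \<subseteq> A \<and>
     (\<forall>f xs. length xs = ar f \<and> set xs \<subseteq> B \<longrightarrow> ops f xs \<in> B)"

datatype 's trm = Var nat | Op 's "'s trm list"

fun wf_trm :: "('s \<Rightarrow> nat) \<Rightarrow> nat \<Rightarrow> 's trm \<Rightarrow> bool" where
  "wf_trm ar k (Var i) = (i < k)"
| "wf_trm ar k (Op f ts) = (length ts = ar f \<and> (\<forall>t\<in>set ts. wf_trm ar k t))"

fun eval_trm :: "('s \<Rightarrow> 'a list \<Rightarrow> 'a) \<Rightarrow> (nat \<Rightarrow> 'a) \<Rightarrow> 's trm \<Rightarrow> 'a" where
  "eval_trm ops env (Var i) = env i"
| "eval_trm ops env (Op f ts) = ops f (map (eval_trm ops env) ts)"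

definition top3 :: "('s \<Rightarrow> 'a list \<Rightarrow> 'a) \<Rightarrow> 's trm \<Rightarrow> 'a \<Rightarrow> 'a \<Rightarrow> 'a \<Rightarrow> 'a" where
  "top3 ops t x y z = eval_trm ops (\<lambda>i. [x, y, z] ! i) t"

definition directed_chain ::
  "'a set \<Rightarrow> ('s \<Rightarrow> nat) \<Rightarrow> ('s \<Rightarrow> 'a list \<Rightarrow> 'a) \<Rightarrow> (nat \<Rightarrow> 's trm) \<Rightarrow> nat \<Rightarrow> bool" where
  "directed_chain A ar ops d n \<longleftrightarrow>
     (\<forall>i\<le>n. wf_trm ar 3 (d i)) \<and>
     (\<forall>x\<in>A. \<forall>y\<in>A. \<forall>z\<in>A. top3 ops (d 0) x y z = x \<and> top3 ops (d n) x y z = z) \<and>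
     (\<forall>i<n. \<forall>x\<in>A. \<forall>y\<in>A. top3 ops (d i) x y y = top3 ops (d (Suc i)) x x y)"

definition has_directed_jonsson_terms ::
  "'a set \<Rightarrow> ('s \<Rightarrow> nat) \<Rightarrow> ('s \<Rightarrow> 'a list \<Rightarrow> 'a) \<Rightarrow> bool" where
  "has_directed_jonsson_terms A ar ops \<longleftrightarrow>
     (\<exists>d n. directed_chain A ar ops d n \<and>
        (\<forall>i\<le>n. \<forall>x\<in>A. \<forall>y\<in>A. top3 ops (d i) x y x = x))"

definition jonsson_absorbs ::
  "'a set \<Rightarrow> ('s \<Rightarrow> nat) \<Rightarrow> ('s \<Rightarrow> 'a list \<Rightarrow> 'a) \<Rightarrow> 'a set \<Rightarrow> bool" where
  "jonsson_absorbs A ar ops B \<longleftrightarrow> subuniverse A ar ops B \<and>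
     (\<exists>d n. directed_chain A ar ops d n \<and>
        (\<forall>i\<le>n. \<forall>b\<in>B. \<forall>b'\<in>B. \<forall>a\<in>A. top3 ops (d i) b a b' \<in> B))"

end

theory Submission
  imports Defs
begin

text \<open>Directed chains can be composed: if \<open>d\<^sub>0,\<dots>,d\<^sub>n\<close> and
  \<open>e\<^sub>0,\<dots>,e\<^sub>m\<close> are directed chains, then so is the lexicographically indexed
  chain \<open>(i, j) \<mapsto> d\<^sub>i(x, e\<^sub>j(x,y,z), z)\<close>. It satisfies \<open>t(a,y,a) = a\<close> at every
  point \<open>a\<close> at which \<open>d\<close> does, and also, since \<open>d\<^sub>i(a,a,a) = a\<close> by idempotency,
  at every point at which \<open>e\<close> does. If each singleton \<open>{a}\<close> Jonsson absorbs the
  finite algebra, composing the witnessing chains over all elements of \<open>A\<close> yields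
  a chain with \<open>t(x,y,x) = x\<close> everywhere, i.e. directed Jonsson terms. Conversely,
  directed Jonsson terms witness the absorption of every singleton, which is a
  subuniverse by idempotency.\<close>

fun subst_trm :: "(nat \<Rightarrow> 's trm) \<Rightarrow> 's trm \<Rightarrow> 's trm" where
  "subst_trm \<sigma> (Var i) = \<sigma> i"
| "subst_trm \<sigma> (Op f ts) = Op f (map (subst_trm \<sigma>) ts)"

lemma eval_subst_trm:
  "eval_trm ops env (subst_trm \<sigma> t) = eval_trm ops (\<lambda>v. eval_trm ops env (\<sigma> v)) t"
  by (induction t) (auto cong: map_cong)

lemma wf_subst_trm:
  "wf_trm ar k t \<Longrightarrow> (\<And>v. v < k \<Longrightarrow> wf_trm ar k' (\<sigma> v)) \<Longrightarrow> wf_trm ar k' (subst_trm \<sigma> t)"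
  by (induction t) auto

lemma eval_trm_cong:
  "wf_trm ar k t \<Longrightarrow> (\<And>i. i < k \<Longrightarrow> env i = env' i) \<Longrightarrow> eval_trm ops env t = eval_trm ops env' t"
  by (induction t) (auto cong: map_cong)

lemma eval_trm_closed:
  assumes "is_algebra A ar ops" "wf_trm ar k t" "\<And>i. i < k \<Longrightarrow> env i \<in> A"
  shows "eval_trm ops env t \<in> A"
  using assms(2)
proof (induction t)
  case (Op f ts)
  then have "set (map (eval_trm ops env) ts) \<subseteq> A" "length (map (eval_trm ops env) ts) = ar f"
    by auto
  then show ?case
    using assms(1) unfolding is_algebra_def by simp
qed (use assms(3) in simp)

lemma eval_trm_idem:
  assumes "idempotent_alg A ar ops" "wf_trm ar k t" "x \<in> A" "\<And>i. i < k \<Longrightarrow> env i = x"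
  shows "eval_trm ops env t = x"
  using assms(2)
proof (induction t)
  case (Op f ts)
  then have "map (eval_trm ops env) ts = replicate (ar f) x"
    by (auto intro: replicate_eqI)
  then show ?case
    using assms(1,3) unfolding idempotent_alg_def by simp
qed (use assms(4) in simp)

lemma top3_closed:
  "is_algebra A ar ops \<Longrightarrow> wf_trm ar 3 t \<Longrightarrow> x \<in> A \<Longrightarrow> y \<in> A \<Longrightarrow> z \<in> A \<Longrightarrow>
    top3 ops t x y z \<in> A"
  unfolding top3_def by (rule eval_trm_closed) (auto simp: less_Suc_eq numeral_3_eq_3)

lemma top3_idem:
  "idempotent_alg A ar ops \<Longrightarrow> wf_trm ar 3 t \<Longrightarrow> x \<in> A \<Longrightarrow> top3 ops t x x x = x"
  unfolding top3_def by (rule eval_trm_idem) (auto simp: less_Suc_eq numeral_3_eq_3)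

definition chain_fixes_at ::
  "'a set \<Rightarrow> ('s \<Rightarrow> 'a list \<Rightarrow> 'a) \<Rightarrow> (nat \<Rightarrow> 's trm) \<Rightarrow> nat \<Rightarrow> 'a \<Rightarrow> bool" where
  "chain_fixes_at A ops d n a \<longleftrightarrow> (\<forall>i\<le>n. \<forall>y\<in>A. top3 ops (d i) a y a = a)"

lemma has_directed_jonsson_terms_iff:
  "has_directed_jonsson_terms A ar ops \<longleftrightarrow>
    (\<exists>d n. directed_chain A ar ops d n \<and> (\<forall>a\<in>A. chain_fixes_at A ops d n a))"
  unfolding has_directed_jonsson_terms_def chain_fixes_at_def by blast

lemma subuniverse_singleton:
  assumes "idempotent_alg A ar ops" "a \<in> A"
  shows "subuniverse A ar ops {a}"
  unfolding subuniverse_def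
proof (intro conjI allI impI)
  fix f xs assume "length xs = ar f \<and> set xs \<subseteq> {a}"
  then have "xs = replicate (ar f) a" by (auto intro: replicate_eqI)
  then show "ops f xs \<in> {a}" using assms unfolding idempotent_alg_def by simp
qed (use assms(2) in simp)

lemma jonsson_absorbs_singleton_iff:
  assumes "idempotent_alg A ar ops" "a \<in> A"
  shows "jonsson_absorbs A ar ops {a} \<longleftrightarrow>
    (\<exists>d n. directed_chain A ar ops d n \<and> chain_fixes_at A ops d n a)"
  unfolding jonsson_absorbs_def chain_fixes_at_def
  using subuniverse_singleton[OF assms] by auto

text \<open>The composite chain, indexed by \<open>k = i * Suc m + j\<close> with \<open>j \<le> m\<close>.\<close>
definition chain_comp :: "(nat \<Rightarrow> 's trm) \<Rightarrow> (nat \<Rightarrow> 's trm) \<Rightarrow> nat \<Rightarrow> nat \<Rightarrow> 's trm" where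
  "chain_comp d e m k =
    subst_trm (\<lambda>v. if v = 1 then e (k mod Suc m) else Var v) (d (k div Suc m))"

lemma block_div_mod:
  assumes "j < (M::nat)"
  shows "(i * M + j) div M = i" "(i * M + j) mod M = j"
  using assms by simp_all

lemma chain_comp_block:
  assumes "j \<le> m"
  shows "chain_comp d e m (i * Suc m + j) =
    subst_trm (\<lambda>v. if v = 1 then e j else Var v) (d i)"
  using assms unfolding chain_comp_def by (simp only: block_div_mod less_Suc_eq_le)

lemma wf_chain_comp_block:
  "wf_trm ar 3 (d i) \<Longrightarrow> wf_trm ar 3 (e j) \<Longrightarrow> j \<le> m \<Longrightarrow>
    wf_trm ar 3 (chain_comp d e m (i * Suc m + j))"
  unfolding chain_comp_block by (rule wf_subst_trm) auto

lemma directed_chain_wf: "directed_chain A ar ops d n \<Longrightarrow> i \<le> n \<Longrightarrow> wf_trm ar 3 (d i)"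
  unfolding directed_chain_def by blast

lemma top3_chain_comp_block:
  assumes "directed_chain A ar ops d n" "i \<le> n" "j \<le> m"
  shows "top3 ops (chain_comp d e m (i * Suc m + j)) x y z =
    top3 ops (d i) x (top3 ops (e j) x y z) z"
  unfolding chain_comp_block[OF assms(3)] top3_def eval_subst_trm
  by (rule eval_trm_cong[OF directed_chain_wf[OF assms(1,2)]])
    (auto simp: less_Suc_eq numeral_3_eq_3)

lemma chain_index_cases:
  assumes "k \<le> n * Suc m + m"
  obtains i j where "k = i * Suc m + j" "i \<le> n" "j \<le> m"
proof
  show "k = k div Suc m * Suc m + k mod Suc m" by (rule div_mult_mod_eq[symmetric])
  show "k mod Suc m \<le> m" using less_Suc_eq_le by auto
  have "k < Suc n * Suc m" using assms by simp
  then show "k div Suc m \<le> n" by (metis less_Suc_eq_le less_mult_imp_div_less)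
qed

lemma directed_chain_comp_step:
  assumes D: "directed_chain A ar ops d n" and E: "directed_chain A ar ops e m"
    and k: "k < n * Suc m + m" and xy: "x \<in> A" "y \<in> A"
  shows "top3 ops (chain_comp d e m k) x y y = top3 ops (chain_comp d e m (Suc k)) x x y"
proof -
  let ?c = "chain_comp d e m"
  note ev = top3_chain_comp_block[OF D, where e = e]
  obtain i j where kij: "k = i * Suc m + j" and i: "i \<le> n" and j: "j \<le> m"
    using less_imp_le[OF k] by (rule chain_index_cases)
  show ?thesis
  proof (cases "j < m")
    case True
    have sk: "Suc k = i * Suc m + Suc j" using kij by simp
    have "top3 ops (?c k) x y y = top3 ops (d i) x (top3 ops (e j) x y y) y"
      using ev[OF i j, folded kij] .
    also have "\<dots> = top3 ops (d i) x (top3 ops (e (Suc j)) x x y) y"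
      using E True xy unfolding directed_chain_def by simp
    also have "\<dots> = top3 ops (?c (Suc k)) x x y"
      using ev[OF i Suc_leI[OF True], folded sk] by simp
    finally show ?thesis .
  next
    case False
    with j have jm: "j = m" by simp
    have "i \<noteq> n"
    proof
      assume "i = n"
      with kij jm have "k = n * Suc m + m" by (simp only:)
      with k show False by (simp only: less_irrefl)
    qed
    with i have "i < n" by simp
    have sk: "Suc k = Suc i * Suc m + 0" using kij jm by simp
    have "top3 ops (?c k) x y y = top3 ops (d i) x (top3 ops (e m) x y y) y"
      using ev[OF i j, folded kij] jm by simp
    also have "\<dots> = top3 ops (d i) x y y"
      using E xy unfolding directed_chain_def by simp
    also have "\<dots> = top3 ops (d (Suc i)) x x y"
      using D \<open>i < n\<close> xy unfolding directed_chain_def by simp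
    also have "\<dots> = top3 ops (d (Suc i)) x (top3 ops (e 0) x x y) y"
      using E xy unfolding directed_chain_def by simp
    also have "\<dots> = top3 ops (?c (Suc k)) x x y"
      using ev[OF Suc_leI[OF \<open>i < n\<close>] le0[of m], folded sk] by simp
    finally show ?thesis .
  qed
qed

lemma directed_chain_comp:
  assumes alg: "is_algebra A ar ops"
    and D: "directed_chain A ar ops d n" and E: "directed_chain A ar ops e m"
  shows "directed_chain A ar ops (chain_comp d e m) (n * Suc m + m)"
proof -
  let ?c = "chain_comp d e m"
  note ev = top3_chain_comp_block[OF D, where e = e]
  have wf: "wf_trm ar 3 (?c k)" if "k \<le> n * Suc m + m" for k
    using that
  proof (rule chain_index_cases)
    fix i j assume "k = i * Suc m + j" "i \<le> n" "j \<le> m"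
    then show ?thesis
      using wf_chain_comp_block[OF directed_chain_wf[OF D] directed_chain_wf[OF E]] by simp
  qed
  have first: "top3 ops (?c 0) x y z = x" if "x \<in> A" "y \<in> A" "z \<in> A" for x y z
    using ev[OF le0 le0] that D E top3_closed[OF alg directed_chain_wf[OF E le0]]
    unfolding directed_chain_def by simp
  have last: "top3 ops (?c (n * Suc m + m)) x y z = z" if "x \<in> A" "y \<in> A" "z \<in> A" for x y z
    using ev[OF order_refl order_refl] that D E unfolding directed_chain_def by simp
  show ?thesis
    unfolding directed_chain_def
    by (intro conjI allI impI ballI)
      (rule wf first last directed_chain_comp_step[OF D E]; assumption)+
qed

lemma chain_fixes_at_comp_left:
  assumes alg: "is_algebra A ar ops" and D: "directed_chain A ar ops d n"
    and E: "directed_chain A ar ops e m" and "a \<in> A" and fix_d: "chain_fixes_at A ops d n a"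
  shows "chain_fixes_at A ops (chain_comp d e m) (n * Suc m + m) a"
  unfolding chain_fixes_at_def
proof (intro allI impI ballI)
  fix k y assume "k \<le> n * Suc m + m" "y \<in> A"
  then obtain i j where "k = i * Suc m + j" "i \<le> n" "j \<le> m"
    by (elim chain_index_cases)
  moreover note directed_chain_wf[OF E \<open>j \<le> m\<close>]
  ultimately show "top3 ops (chain_comp d e m k) a y a = a"
    using top3_chain_comp_block[OF D \<open>i \<le> n\<close> \<open>j \<le> m\<close>, where e = e and x = a and z = a]
      fix_d \<open>a \<in> A\<close> \<open>y \<in> A\<close>
    by (simp add: top3_closed[OF alg] chain_fixes_at_def)
qed

lemma chain_fixes_at_comp_right:
  assumes idem: "idempotent_alg A ar ops" and D: "directed_chain A ar ops d n"
    and "a \<in> A" and fix_e: "chain_fixes_at A ops e m a"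
  shows "chain_fixes_at A ops (chain_comp d e m) (n * Suc m + m) a"
  unfolding chain_fixes_at_def
proof (intro allI impI ballI)
  fix k y assume "k \<le> n * Suc m + m" "y \<in> A"
  then obtain i j where "k = i * Suc m + j" "i \<le> n" "j \<le> m"
    by (elim chain_index_cases)
  moreover note directed_chain_wf[OF D \<open>i \<le> n\<close>]
  ultimately show "top3 ops (chain_comp d e m k) a y a = a"
    using top3_chain_comp_block[OF D \<open>i \<le> n\<close> \<open>j \<le> m\<close>, where e = e and x = a and z = a]
      fix_e \<open>a \<in> A\<close> \<open>y \<in> A\<close>
    by (simp add: top3_idem[OF idem] chain_fixes_at_def)
qed

lemma directed_chain_fixing_finite_set:
  assumes alg: "is_algebra A ar ops" and idem: "idempotent_alg A ar ops"
    and "finite S" "S \<noteq> {}" "S \<subseteq> A"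
    and pointwise: "\<And>a. a \<in> S \<Longrightarrow> \<exists>d n. directed_chain A ar ops d n \<and> chain_fixes_at A ops d n a"
  shows "\<exists>d n. directed_chain A ar ops d n \<and> (\<forall>a\<in>S. chain_fixes_at A ops d n a)"
  using \<open>finite S\<close> \<open>S \<noteq> {}\<close> \<open>S \<subseteq> A\<close> pointwise
proof (induction S rule: finite_ne_induct)
  case (singleton a)
  then show ?case by simp
next
  case (insert a S)
  then obtain d n where D: "directed_chain A ar ops d n"
    and fix_d: "\<forall>b\<in>S. chain_fixes_at A ops d n b"
    by blast
  obtain e m where E: "directed_chain A ar ops e m" and fix_e: "chain_fixes_at A ops e m a"
    using insert.prems(2) by blast
  have "chain_fixes_at A ops (chain_comp d e m) (n * Suc m + m) b" if "b \<in> insert a S" for b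
  proof (cases "b = a")
    case True
    then show ?thesis
      using chain_fixes_at_comp_right[OF idem D _ fix_e] insert.prems(1) by simp
  next
    case False
    then show ?thesis
      using chain_fixes_at_comp_left[OF alg D E] fix_d that insert.prems(1) by blast
  qed
  then show ?case
    using directed_chain_comp[OF alg D E] by blast
qed

theorem corollary2p4:
  fixes A :: "'a set" and ar :: "'s \<Rightarrow> nat" and ops :: "'s \<Rightarrow> 'a list \<Rightarrow> 'a"
  assumes "is_algebra A ar ops" and "A \<noteq> {}" and "finite A" and "idempotent_alg A ar ops"
  shows "has_directed_jonsson_terms A ar ops \<longleftrightarrow> (\<forall>a\<in>A. jonsson_absorbs A ar ops {a})"
proof
  assume "has_directed_jonsson_terms A ar ops"
  then obtain d n where "directed_chain A ar ops d n" "\<forall>a\<in>A. chain_fixes_at A ops d n a"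
    unfolding has_directed_jonsson_terms_iff by blast
  then show "\<forall>a\<in>A. jonsson_absorbs A ar ops {a}"
    by (auto simp: jonsson_absorbs_singleton_iff[OF assms(4)])
next
  assume absorbs: "\<forall>a\<in>A. jonsson_absorbs A ar ops {a}"
  have "\<exists>d n. directed_chain A ar ops d n \<and> chain_fixes_at A ops d n a" if "a \<in> A" for a
    using absorbs that jonsson_absorbs_singleton_iff[OF assms(4) that] by blast
  then show "has_directed_jonsson_terms A ar ops"
    unfolding has_directed_jonsson_terms_iff
    by (rule directed_chain_fixing_finite_set[OF assms(1,4,3,2) subset_refl])
qed

end
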